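(* Let $\ell\ge 2$. There exist constants $C=C(\ell)$ and $c=c(\ell)>0$ such that the following holds. If $G$ is an $n$-vertex clean graph with average degree $d\ge Cn^{1/2}$, then the total weight of copies of $P_{\ell+1}^{\square}$ in $G$ is at least $c\,n\,d^{\ell+1}$.
   Context: An $n$-vertex graph $H$ with average degree $d$ is clean if for every edge $uv\in E(H)$, $u$ has at least $d/16$ neighbours $w$ in $H$ with $d_H(v,w)\ge \frac{d^2}{128n}$, where $d_H(v,w)$ is the number of common neighbours of $v,w$. A copy of $P_{\ell+1}^{\square}$ in $G$ is a tuple of distinct vertices $(x_0,\dots,x_\ell,y_0,\dots,y_\ell)$ with $x_iy_i\in E(G)$ for $0\le i\le\ell$ and $x_{i-1}x_i,\ y_{i-1}y_i\in E(G)$ for $1\le i\le \ell$. Its weight is $1/\prod_{i=1}^{\ell}\max\big(d_G(x_{i-1},y_i),\frac{d^2}{n}\big)$. *)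

theory Defs
  imports Complex_Main
begin

definition simple_graph :: "nat set \<Rightarrow> (nat \<Rightarrow> nat \<Rightarrow> bool) \<Rightarrow> bool" where
  "simple_graph V E \<longleftrightarrow> finite V \<and> (\<forall>u v. E u v \<longrightarrow> E v u) \<and> (\<forall>u. \<not> E u u)
     \<and> (\<forall>u v. E u v \<longrightarrow> u \<in> V \<and> v \<in> V)"

definition nbhd :: "nat set \<Rightarrow> (nat \<Rightarrow> nat \<Rightarrow> bool) \<Rightarrow> nat \<Rightarrow> nat set" where
  "nbhd V E u = {w \<in> V. E u w}"

definition degree :: "nat set \<Rightarrow> (nat \<Rightarrow> nat \<Rightarrow> bool) \<Rightarrow> nat \<Rightarrow> nat" where
  "degree V E u = card (nbhd V E u)"

definition codeg :: "nat set \<Rightarrow> (nat \<Rightarrow> nat \<Rightarrow> bool) \<Rightarrow> nat \<Rightarrow> nat \<Rightarrow> nat" where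
  "codeg V E v w = card (nbhd V E v \<inter> nbhd V E w)"

definition avg_degree :: "nat set \<Rightarrow> (nat \<Rightarrow> nat \<Rightarrow> bool) \<Rightarrow> real" where
  "avg_degree V E = (\<Sum>u\<in>V. real (degree V E u)) / real (card V)"

definition clean :: "nat set \<Rightarrow> (nat \<Rightarrow> nat \<Rightarrow> bool) \<Rightarrow> bool" where
  "clean V E \<longleftrightarrow> (\<forall>u v. E u v \<longrightarrow>
     real (card {w \<in> nbhd V E u. real (codeg V E v w) \<ge> (avg_degree V E)^2 / (128 * real (card V))})
       \<ge> avg_degree V E / 16)"

text \<open>Copies of the square of a path, encoded as pairs of lists (xs, ys) with
  xs = [x_0,...,x_l], ys = [y_0,...,y_l].\<close>
definition square_path_copies :: "nat set \<Rightarrow> (nat \<Rightarrow> nat \<Rightarrow> bool) \<Rightarrow> nat \<Rightarrow> (nat list \<times> nat list) set" where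
  "square_path_copies V E l = {(xs, ys). length xs = Suc l \<and> length ys = Suc l
     \<and> set xs \<subseteq> V \<and> set ys \<subseteq> V \<and> distinct (xs @ ys)
     \<and> (\<forall>i\<le>l. E (xs ! i) (ys ! i))
     \<and> (\<forall>i\<in>{1..l}. E (xs ! (i - 1)) (xs ! i) \<and> E (ys ! (i - 1)) (ys ! i))}"

definition copy_weight :: "nat set \<Rightarrow> (nat \<Rightarrow> nat \<Rightarrow> bool) \<Rightarrow> nat \<Rightarrow> nat list \<times> nat list \<Rightarrow> real" where
  "copy_weight V E l c = 1 / (\<Prod>i\<in>{1..l}.
      max (real (codeg V E (fst c ! (i - 1)) (snd c ! i))) ((avg_degree V E)^2 / real (card V)))"

definition total_weight :: "nat set \<Rightarrow> (nat \<Rightarrow> nat \<Rightarrow> bool) \<Rightarrow> nat \<Rightarrow> real" where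
  "total_weight V E l = (\<Sum>c\<in>square_path_copies V E l. copy_weight V E l c)"

end

theory Submission
  imports Defs
begin

text \<open>Copies are grown one rung at a time. For a copy ending in the rung \<open>x\<^sub>k y\<^sub>k\<close>,
  cleanness at the edge \<open>y\<^sub>k x\<^sub>k\<close> yields at least \<open>d/16\<close> neighbours \<open>y\<close> of \<open>y\<^sub>k\<close>
  with \<open>d(x\<^sub>k, y) \<ge> d\<^sup>2/(128n)\<close>; any common neighbour \<open>x\<close> of \<open>x\<^sub>k\<close> and \<open>y\<close> then
  completes the new rung \<open>x y\<close>, and the weight gains the factor \<open>1/max(d(x\<^sub>k,y), d\<^sup>2/n)\<close>.
  Once \<open>d\<^sup>2 \<ge> 512 l n\<close>, avoiding the at most \<open>2(k+1)\<close> vertices already used costs at most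
  half of either count, so every copy passes at least \<open>(d/32)\<cdot>(1/256)\<close> times its weight
  on to the next level. Starting from the \<open>nd\<close> ordered edges, the total weight of
  the copies with \<open>l+1\<close> rungs is at least \<open>nd(d/8192)\<^sup>l\<close>.\<close>

lemma simple_graph_finite: "simple_graph V E \<Longrightarrow> finite V"
  unfolding simple_graph_def by simp

lemma finite_nbhd [simp]: "finite V \<Longrightarrow> finite (nbhd V E u)"
  unfolding nbhd_def by simp

lemma finite_square_path_copies:
  assumes "finite V"
  shows "finite (square_path_copies V E k)"
proof -
  let ?L = "{xs. set xs \<subseteq> V \<and> length xs = Suc k}"
  have "square_path_copies V E k \<subseteq> ?L \<times> ?L"
    unfolding square_path_copies_def by auto
  moreover have "finite (?L \<times> ?L)"
    using finite_lists_length_eq[OF assms] by blast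
  ultimately show ?thesis
    by (rule finite_subset)
qed

lemma avg_degree_nonneg: "avg_degree V E \<ge> 0"
  unfolding avg_degree_def by (simp add: sum_nonneg)

lemma avg_degree_le_card:
  assumes "simple_graph V E"
  shows "avg_degree V E \<le> real (card V)"
proof -
  have "degree V E u \<le> card V" for u
    unfolding degree_def nbhd_def using simple_graph_finite[OF assms] by (intro card_mono) auto
  then have "(\<Sum>u\<in>V. real (degree V E u)) \<le> (\<Sum>u\<in>V. real (card V))"
    by (intro sum_mono) simp
  then have "(\<Sum>u\<in>V. real (degree V E u)) \<le> real (card V) * real (card V)"
    by simp
  then show ?thesis
    unfolding avg_degree_def by (cases "card V = 0") (simp_all add: divide_le_eq)
qed

lemma copy_weight_nonneg: "copy_weight V E k c \<ge> 0"
  unfolding copy_weight_def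
  by (intro divide_nonneg_nonneg prod_nonneg) (auto intro: max.coboundedI1)

lemma total_weight_nonneg: "total_weight V E k \<ge> 0"
  unfolding total_weight_def by (intro sum_nonneg copy_weight_nonneg)

lemma last_eq_nth: "length xs = Suc k \<Longrightarrow> last xs = xs ! k"
  by (metis diff_Suc_1 last_conv_nth list.size(3) nat.distinct(1))

lemma copy_weight_snoc:
  assumes "length xs = Suc k" "length ys = Suc k"
  shows "copy_weight V E (Suc k) (xs @ [x], ys @ [y]) =
    copy_weight V E k (xs, ys) / max (real (codeg V E (last xs) y)) ((avg_degree V E)^2 / real (card V))"
proof -
  let ?M = "(avg_degree V E)^2 / real (card V)"
  have "(\<Prod>i\<in>{1..k}. max (real (codeg V E ((xs @ [x]) ! (i - 1)) ((ys @ [y]) ! i))) ?M)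
      = (\<Prod>i\<in>{1..k}. max (real (codeg V E (xs ! (i - 1)) (ys ! i))) ?M)"
    using assms by (intro prod.cong) (auto simp: nth_append)
  then show ?thesis
    using assms by (simp add: copy_weight_def nth_append last_eq_nth)
qed

lemma total_weight_0_ge:
  assumes "simple_graph V E"
  shows "real (card V) * avg_degree V E \<le> total_weight V E 0"
proof -
  have fin: "finite V" using simple_graph_finite[OF assms] .
  let ?S = "SIGMA u:V. nbhd V E u"
  let ?g = "\<lambda>(u, w). ([u], [w])"
  have "?g ` ?S \<subseteq> square_path_copies V E 0"
    using assms unfolding square_path_copies_def nbhd_def simple_graph_def by auto
  moreover have "inj_on ?g ?S" by (auto simp: inj_on_def)
  ultimately have "card ?S \<le> card (square_path_copies V E 0)"
    by (metis card_image card_mono finite_square_path_copies fin)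
  moreover have "card ?S = (\<Sum>u\<in>V. degree V E u)"
    using fin by (simp add: degree_def)
  moreover have "real (card V) * avg_degree V E = (\<Sum>u\<in>V. real (degree V E u))"
    unfolding avg_degree_def using fin by (cases "card V = 0") simp_all
  moreover have "total_weight V E 0 = real (card (square_path_copies V E 0))"
    by (simp add: total_weight_def copy_weight_def)
  ultimately show ?thesis by (simp flip: of_nat_sum)
qed

definition copy_vertices :: "nat list \<times> nat list \<Rightarrow> nat set" where
  "copy_vertices c = set (fst c) \<union> set (snd c)"

definition next_y_choices :: "nat set \<Rightarrow> (nat \<Rightarrow> nat \<Rightarrow> bool) \<Rightarrow> nat list \<times> nat list \<Rightarrow> nat set" where
  "next_y_choices V E c =
     {y \<in> nbhd V E (last (snd c)).
        (avg_degree V E)^2 / (128 * real (card V)) \<le> real (codeg V E (last (fst c)) y)}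
     - copy_vertices c"

definition next_x_choices :: "nat set \<Rightarrow> (nat \<Rightarrow> nat \<Rightarrow> bool) \<Rightarrow> nat list \<times> nat list \<Rightarrow> nat \<Rightarrow> nat set" where
  "next_x_choices V E c y = nbhd V E (last (fst c)) \<inter> nbhd V E y - copy_vertices c"

definition extension_factor :: "nat set \<Rightarrow> (nat \<Rightarrow> nat \<Rightarrow> bool) \<Rightarrow> nat list \<times> nat list \<Rightarrow> real" where
  "extension_factor V E c = (\<Sum>y\<in>next_y_choices V E c.
     real (card (next_x_choices V E c y))
       / max (real (codeg V E (last (fst c)) y)) ((avg_degree V E)^2 / real (card V)))"

lemma card_copy_vertices_le:
  assumes "c \<in> square_path_copies V E k"
  shows "card (copy_vertices c) \<le> 2 * Suc k"
proof -
  have "card (copy_vertices c) \<le> card (set (fst c)) + card (set (snd c))"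
    unfolding copy_vertices_def by (rule card_Un_le)
  also have "\<dots> \<le> length (fst c) + length (snd c)"
    by (intro add_mono card_length)
  finally show ?thesis
    using assms by (auto simp: square_path_copies_def)
qed

lemma snoc_in_square_path_copies:
  assumes G: "simple_graph V E" and c: "(xs, ys) \<in> square_path_copies V E k"
    and y: "y \<in> next_y_choices V E (xs, ys)" and x: "x \<in> next_x_choices V E (xs, ys) y"
  shows "(xs @ [x], ys @ [y]) \<in> square_path_copies V E (Suc k)"
proof -
  from c have lx: "length xs = Suc k" and ly: "length ys = Suc k"
    and rungs: "\<forall>i\<le>k. E (xs ! i) (ys ! i)"
    and rails: "\<forall>i\<in>{1..k}. E (xs ! (i - 1)) (xs ! i) \<and> E (ys ! (i - 1)) (ys ! i)"
    unfolding square_path_copies_def by auto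
  from y have "E (ys ! k) y" "y \<notin> set xs \<union> set ys"
    using last_eq_nth[OF ly] unfolding next_y_choices_def nbhd_def copy_vertices_def by auto
  moreover from x have "E (xs ! k) x" "E x y" "x \<notin> set xs \<union> set ys"
    using last_eq_nth[OF lx] G
    unfolding next_x_choices_def nbhd_def copy_vertices_def simple_graph_def by auto
  moreover have "x \<noteq> y"
    using \<open>E x y\<close> G unfolding simple_graph_def by auto
  moreover have "x \<in> V" "y \<in> V"
    using \<open>E x y\<close> G unfolding simple_graph_def by auto
  ultimately show ?thesis
    using c lx ly rungs rails
    unfolding square_path_copies_def
    by (auto simp: nth_append le_Suc_eq)
qed

lemma total_weight_Suc_ge:
  assumes G: "simple_graph V E"
  shows "(\<Sum>c\<in>square_path_copies V E k. copy_weight V E k c * extension_factor V E c)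
    \<le> total_weight V E (Suc k)"
proof -
  let ?P = "square_path_copies V E k"
  let ?Y = "next_y_choices V E" and ?X = "next_x_choices V E"
  let ?t = "\<lambda>c y. copy_weight V E k c
     / max (real (codeg V E (last (fst c)) y)) ((avg_degree V E)^2 / real (card V))"
  let ?S = "SIGMA c:?P. SIGMA y:?Y c. ?X c y"
  let ?g = "\<lambda>(c, y, x). (fst c @ [x], snd c @ [y])"
  have fin: "finite V" using simple_graph_finite[OF G] .
  have finY: "finite (?Y c)" and finX: "finite (?X c y)" for c y
    using fin by (auto simp: next_y_choices_def next_x_choices_def)
  have "(\<Sum>c\<in>?P. copy_weight V E k c * extension_factor V E c)
      = (\<Sum>c\<in>?P. \<Sum>y\<in>?Y c. \<Sum>x\<in>?X c y. ?t c y)"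
    by (simp add: extension_factor_def sum_distrib_left mult.commute)
  also have "\<dots> = (\<Sum>c\<in>?P. \<Sum>(y, x)\<in>(SIGMA y:?Y c. ?X c y). ?t c y)"
    using finY finX by (intro sum.cong refl) (simp add: sum.Sigma del: sum_constant)
  also have "\<dots> = (\<Sum>(c, y, x)\<in>?S. ?t c y)"
    using finite_square_path_copies[OF fin] finY finX
    by (subst sum.Sigma) (auto simp: split_def)
  also have "\<dots> = (\<Sum>z\<in>?S. copy_weight V E (Suc k) (?g z))"
  proof (rule sum.cong)
    fix z assume "z \<in> ?S"
    then obtain xs ys y x where "z = ((xs, ys), y, x)" "length xs = Suc k" "length ys = Suc k"
      by (auto simp: square_path_copies_def)
    then show "(case z of (c, y, x) \<Rightarrow> ?t c y) = copy_weight V E (Suc k) (?g z)"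
      by (simp add: copy_weight_snoc)
  qed simp
  also have "\<dots> = sum (copy_weight V E (Suc k)) (?g ` ?S)"
    by (subst sum.reindex) (auto simp: inj_on_def)
  also have "\<dots> \<le> total_weight V E (Suc k)"
    unfolding total_weight_def
  proof (rule sum_mono2)
    show "?g ` ?S \<subseteq> square_path_copies V E (Suc k)"
      using snoc_in_square_path_copies[OF G] by auto
  qed (use fin in \<open>simp_all add: finite_square_path_copies copy_weight_nonneg\<close>)
  finally show ?thesis .
qed

lemma card_Diff_ge:
  "finite B \<Longrightarrow> real (card A) - real (card B) \<le> real (card (A - B))"
  using diff_card_le_card_Diff[of B A] by linarith

lemma quotient_max_ge:
  fixes D a X :: real
  assumes "0 < D" "D \<le> a" "a / 2 \<le> X"
  shows "1 / 256 \<le> X / max a (128 * D)"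
  using assms by (cases "a \<le> 128 * D") (simp_all add: field_simps max_def)

lemma extension_factor_ge:
  assumes G: "simple_graph V E" and cl: "clean V E" and n: "card V > 0"
    and dense: "real (512 * Suc k) * real (card V) \<le> (avg_degree V E)^2"
    and c: "c \<in> square_path_copies V E k"
  shows "avg_degree V E / 8192 \<le> extension_factor V E c"
proof -
  define d where "d = avg_degree V E"
  define D where "D = d^2 / (128 * real (card V))"
  let ?B = "copy_vertices c"
  let ?Y = "next_y_choices V E c"
  have B: "real (card ?B) \<le> 2 * Suc k"
    using card_copy_vertices_le[OF c] by simp
  have D: "4 * Suc k \<le> D"
    using dense n by (simp add: D_def d_def field_simps)
  have "d * real (card V) \<ge> d * d"
    using avg_degree_le_card[OF G] avg_degree_nonneg by (simp add: d_def mult_left_mono)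
  then have "real (512 * Suc k) * real (card V) \<le> d * real (card V)"
    using dense by (simp add: d_def power2_eq_square)
  then have d: "512 * Suc k \<le> d"
    using n by simp
  obtain xs ys where c_eq: "c = (xs, ys)" and "E (last ys) (last xs)"
    using c G by (cases c) (auto simp: square_path_copies_def simple_graph_def last_eq_nth)
  have M: "d^2 / real (card V) = 128 * D"
    unfolding D_def by simp
  let ?A = "{y \<in> nbhd V E (last (snd c)). D \<le> real (codeg V E (last (fst c)) y)}"
  have "d / 16 \<le> real (card ?A)"
    using cl \<open>E (last ys) (last xs)\<close> by (auto simp: clean_def D_def d_def c_eq)
  moreover have "?Y = ?A - ?B"
    by (simp add: next_y_choices_def D_def d_def)
  ultimately have Y: "d / 32 \<le> real (card ?Y)"
    using card_Diff_ge[of ?B ?A] B d by (simp add: copy_vertices_def)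
  have summand: "1 / 256 \<le> real (card (next_x_choices V E c y))
      / max (real (codeg V E (last (fst c)) y)) (d^2 / real (card V))"
    if y: "y \<in> ?Y" for y
    unfolding M
  proof (rule quotient_max_ge)
    let ?a = "real (codeg V E (last (fst c)) y)"
    show "0 < D" and "D \<le> ?a"
      using D y by (auto simp: next_y_choices_def D_def d_def)
    then show "?a / 2 \<le> real (card (next_x_choices V E c y))"
      using card_Diff_ge[of ?B "nbhd V E (last (fst c)) \<inter> nbhd V E y"] B D
      by (simp add: next_x_choices_def codeg_def copy_vertices_def)
  qed
  have "real (card ?Y) / 256 \<le> extension_factor V E c"
    using sum_mono[of ?Y "\<lambda>_. 1 / 256", OF summand]
    by (simp add: extension_factor_def d_def)
  then show ?thesis
    using Y by (simp add: d_def)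
qed

lemma total_weight_Suc_ge_mult:
  assumes G: "simple_graph V E" and cl: "clean V E" and n: "card V > 0"
    and dense: "real (512 * Suc k) * real (card V) \<le> (avg_degree V E)^2"
  shows "total_weight V E k * (avg_degree V E / 8192) \<le> total_weight V E (Suc k)"
proof -
  have "total_weight V E k * (avg_degree V E / 8192)
      = (\<Sum>c\<in>square_path_copies V E k. copy_weight V E k c * (avg_degree V E / 8192))"
    by (simp add: total_weight_def sum_distrib_right)
  also have "\<dots> \<le> (\<Sum>c\<in>square_path_copies V E k. copy_weight V E k c * extension_factor V E c)"
    by (intro sum_mono mult_left_mono extension_factor_ge[OF G cl n dense] copy_weight_nonneg)
  also have "\<dots> \<le> total_weight V E (Suc k)"
    by (rule total_weight_Suc_ge[OF G])
  finally show ?thesis .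
qed

lemma total_weight_ge_power:
  assumes G: "simple_graph V E" and cl: "clean V E" and n: "card V > 0"
    and dense: "real (512 * l) * real (card V) \<le> (avg_degree V E)^2"
  shows "k \<le> l \<Longrightarrow> real (card V) * avg_degree V E * (avg_degree V E / 8192)^k \<le> total_weight V E k"
proof (induction k)
  case 0
  then show ?case using total_weight_0_ge[OF G] by simp
next
  case (Suc k)
  have "real (512 * Suc k) * real (card V) \<le> (avg_degree V E)^2"
    using Suc.prems by (intro order_trans[OF _ dense] mult_right_mono) auto
  then have step: "total_weight V E k * (avg_degree V E / 8192) \<le> total_weight V E (Suc k)"
    by (rule total_weight_Suc_ge_mult[OF G cl n])
  have "real (card V) * avg_degree V E * (avg_degree V E / 8192) ^ Suc k
      = real (card V) * avg_degree V E * (avg_degree V E / 8192) ^ k * (avg_degree V E / 8192)"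
    by simp
  also have "\<dots> \<le> total_weight V E k * (avg_degree V E / 8192)"
    using Suc by (intro mult_right_mono) (simp_all add: avg_degree_nonneg)
  also have "\<dots> \<le> total_weight V E (Suc k)"
    by (rule step)
  finally show ?case .
qed

theorem lemma5p3:
  fixes l :: nat
  assumes "l \<ge> 2"
  shows "\<exists>C c :: real. c > 0 \<and>
    (\<forall>(V :: nat set) E. simple_graph V E \<longrightarrow> clean V E \<longrightarrow>
       avg_degree V E \<ge> C * sqrt (real (card V)) \<longrightarrow>
       total_weight V E l \<ge> c * real (card V) * (avg_degree V E) ^ (l + 1))"
proof (intro exI conjI allI impI)
  show "(1 / 8192 ^ l :: real) > 0" by simp
  fix V :: "nat set" and E
  assume G: "simple_graph V E" and cl: "clean V E"
    and large: "sqrt (real (512 * l)) * sqrt (real (card V)) \<le> avg_degree V E"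
  have "1 / 8192 ^ l * real (card V) * avg_degree V E ^ (l + 1)
      = real (card V) * avg_degree V E * (avg_degree V E / 8192) ^ l"
    by (simp add: power_divide)
  also have "\<dots> \<le> total_weight V E l"
  proof (cases "card V = 0")
    case True
    then show ?thesis by (simp add: total_weight_nonneg)
  next
    case False
    have "(sqrt (real (512 * l)) * sqrt (real (card V)))^2 \<le> (avg_degree V E)^2"
      using large by (intro power_mono) auto
    then have "real (512 * l) * real (card V) \<le> (avg_degree V E)^2"
      by (simp add: power_mult_distrib)
    then show ?thesis
      using total_weight_ge_power[OF G cl _ _ order_refl] False by simp
  qed
  finally show "1 / 8192 ^ l * real (card V) * avg_degree V E ^ (l + 1) \<le> total_weight V E l" .
qed

end
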